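(* Let $\Bbbk$ be a field of characteristic $0$ and $A=\Bbbk[t]$ over $B=\Bbbk$. A double bracket on $A$ is quasi-Poisson if and only if it is of the form $$\{\!\{t,t\}\!\}=\lambda(t\otimes1-1\otimes t)+\mu(t^2\otimes1-1\otimes t^2)+\nu(t^2\otimes t-t\otimes t^2)$$ for some $\lambda,\mu,\nu\in\Bbbk$ with $4(\mu^2-\lambda\nu)=1$.
   Context: $\otimes=\otimes_\Bbbk$; Sweedler notation $d=d'\otimes d''$. A double bracket on $A$ is a $\Bbbk$-bilinear map $A\times A\to A\otimes A$ with $\{\!\{a,b\}\!\}=-\{\!\{b,a\}\!\}''\otimes\{\!\{b,a\}\!\}'$ and $\{\!\{a,bc\}\!\}=\{\!\{a,b\}\!\}c+b\{\!\{a,c\}\!\}$, where $x(d'\otimes d'')y=xd'\otimes d''y$. Its triple bracket is $\{\!\{a,b,c\}\!\}=\{\!\{a,\{\!\{b,c\}\!\}'\}\!\}\otimes\{\!\{b,c\}\!\}''+\tau\{\!\{b,\{\!\{c,a\}\!\}'\}\!\}\otimes\{\!\{c,a\}\!\}''+\tau^2\{\!\{c,\{\!\{a,b\}\!\}'\}\!\}\otimes\{\!\{a,b\}\!\}''$, with $\tau(x_1\otimes x_2\otimes x_3)=x_3\otimes x_1\otimes x_2$. It is quasi-Poisson (over $B=\Bbbk$) if $\{\!\{a,b,c\}\!\}=\frac14(ca\otimes b\otimes1-ca\otimes1\otimes b-c\otimes ab\otimes1+c\otimes a\otimes b-a\otimes b\otimes c+a\otimes1\otimes bc+1\otimes ab\otimes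 c-1\otimes a\otimes bc)$ for all $a,b,c\in A$. *)

theory Defs
  imports "HOL-Computational_Algebra.Polynomial"
begin

text \<open>The tensor square A \<otimes> A is
 identified with k[x,y] = 'a poly poly (inner variable x = first tensor factor,
 outer variable y = second tensor factor); the element a \<otimes> b is a(x) b(y).
 Similarly A \<otimes> A \<otimes> A is 'a poly poly poly (x, y, z = factors 1, 2, 3).
 The coefficient of t^i \<otimes> t^j in d is coeff (coeff d j) i.\<close>

type_synonym 'a tens2 = "'a poly poly"
type_synonym 'a tens3 = "'a poly poly poly"

definition tensor2 :: "'a::comm_ring_1 poly \<Rightarrow> 'a poly \<Rightarrow> 'a tens2" where
  "tensor2 a b = smult a (map_poly (\<lambda>c. [:c:]) b)"

definition tensor3 :: "'a::comm_ring_1 poly \<Rightarrow> 'a poly \<Rightarrow> 'a poly \<Rightarrow> 'a tens3" where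
  "tensor3 a b c = smult (tensor2 a b) (map_poly (\<lambda>r. [:[:r:]:]) c)"

definition tensor21 :: "'a::comm_ring_1 tens2 \<Rightarrow> 'a poly \<Rightarrow> 'a tens3" where
  "tensor21 e c = smult e (map_poly (\<lambda>r. [:[:r:]:]) c)"

definition sc2 :: "'a::comm_ring_1 \<Rightarrow> 'a tens2 \<Rightarrow> 'a tens2" where
  "sc2 r d = smult [:r:] d"

definition sc3 :: "'a::comm_ring_1 \<Rightarrow> 'a tens3 \<Rightarrow> 'a tens3" where
  "sc3 r e = smult [:[:r:]:] e"

text \<open>outer bimodule structure: x (d' \<otimes> d'') y = x d' \<otimes> d'' y\<close>
definition bimod :: "'a::comm_ring_1 poly \<Rightarrow> 'a tens2 \<Rightarrow> 'a poly \<Rightarrow> 'a tens2" where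
  "bimod x d y = smult x d * map_poly (\<lambda>c. [:c:]) y"

text \<open>d' \<otimes> d'' \<mapsto> d'' \<otimes> d'\<close>
definition flip2 :: "'a::comm_ring_1 tens2 \<Rightarrow> 'a tens2" where
  "flip2 d = (\<Sum>j\<le>degree d. \<Sum>i\<le>degree (coeff d j).
      tensor2 (monom (coeff (coeff d j) i) j) (monom 1 i))"

text \<open>tau (x1 \<otimes> x2 \<otimes> x3) = x3 \<otimes> x1 \<otimes> x2\<close>
definition tau3 :: "'a::comm_ring_1 tens3 \<Rightarrow> 'a tens3" where
  "tau3 e = (\<Sum>k\<le>degree e. \<Sum>j\<le>degree (coeff e k). \<Sum>i\<le>degree (coeff (coeff e k) j).
      tensor3 (monom (coeff (coeff (coeff e k) j) i) k) (monom 1 i) (monom 1 j))"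

text \<open>F(d') \<otimes> d'' (Sweedler notation), extended linearly in d\<close>
definition ext_left :: "('a::comm_ring_1 poly \<Rightarrow> 'a tens2) \<Rightarrow> 'a tens2 \<Rightarrow> 'a tens3" where
  "ext_left F d = (\<Sum>j\<le>degree d. \<Sum>i\<le>degree (coeff d j).
      tensor21 (F (monom 1 i)) (monom (coeff (coeff d j) i) j))"

definition double_bracket :: "('a::comm_ring_1 poly \<Rightarrow> 'a poly \<Rightarrow> 'a tens2) \<Rightarrow> bool" where
  "double_bracket B \<longleftrightarrow>
     (\<forall>a1 a2 b. B (a1 + a2) b = B a1 b + B a2 b) \<and>
     (\<forall>a b1 b2. B a (b1 + b2) = B a b1 + B a b2) \<and>
     (\<forall>r a b. B (smult r a) b = sc2 r (B a b)) \<and>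
     (\<forall>r a b. B a (smult r b) = sc2 r (B a b)) \<and>
     (\<forall>a b. B a b = - flip2 (B b a)) \<and>
     (\<forall>a b c. B a (b * c) = bimod 1 (B a b) c + bimod b (B a c) 1)"

definition triple_bracket ::
  "('a::comm_ring_1 poly \<Rightarrow> 'a poly \<Rightarrow> 'a tens2) \<Rightarrow> 'a poly \<Rightarrow> 'a poly \<Rightarrow> 'a poly \<Rightarrow> 'a tens3" where
  "triple_bracket B a b c =
     ext_left (B a) (B b c) + tau3 (ext_left (B b) (B c a)) + tau3 (tau3 (ext_left (B c) (B a b)))"

definition quasi_poisson :: "('a::field poly \<Rightarrow> 'a poly \<Rightarrow> 'a tens2) \<Rightarrow> bool" where
  "quasi_poisson B \<longleftrightarrow> (\<forall>a b c. triple_bracket B a b c = sc3 (1/4)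
      (tensor3 (c * a) b 1 - tensor3 (c * a) 1 b - tensor3 c (a * b) 1 + tensor3 c a b
       - tensor3 a b c + tensor3 a 1 (b * c) + tensor3 1 (a * b) c - tensor3 1 a (b * c)))"

end

theory Submission
  imports Defs
begin

text \<open>
  Since \<open>k\<close> is infinite, a tensor in \<open>k[t]\<^sup>\<otimes>\<^sup>2\<close> or \<open>k[t]\<^sup>\<otimes>\<^sup>3\<close> is determined by its values
  as a polynomial function, so everything can be checked pointwise.
  The Leibniz rule and antisymmetry show that a double bracket is determined by
  \<open>P = {{t,t}}\<close>: \<open>(u - v)\<^sup>2 {{a,b}}(u,v) = P(u,v) (a(u) - a(v)) (b(u) - b(v))\<close>.
  Antisymmetry makes \<open>P\<close> vanish on the diagonal, so \<open>P = (t \<otimes> 1 - 1 \<otimes> t) S\<close> with \<open>S\<close>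
  symmetric, and the triple bracket becomes
  \<open>(x - y)(y - z)(x - z) {{a,b,c}}(x,y,z) = K(x,y,z) (a(x) - a(y)) (b(y) - b(z)) (c(x) - c(z))\<close>
  for a kernel \<open>K\<close> quadratic in \<open>S\<close>. Hence the bracket is quasi-Poisson iff
  \<open>K = (x - y)(y - z)(x - z)/4\<close>. Comparing degrees in \<open>x\<close> for generic \<open>y, z\<close> shows that
  \<open>S\<close> then has degree at most one in each variable, so \<open>S = \<lambda> + \<mu>(u + v) + \<nu>uv\<close>, and
  for such \<open>S\<close> one computes \<open>K = (\<mu>\<^sup>2 - \<lambda>\<nu>)(x - y)(y - z)(x - z)\<close>.
\<close>

section \<open>Tensors as polynomial functions\<close>

definition eval2 :: "'a::comm_ring_1 tens2 \<Rightarrow> 'a \<Rightarrow> 'a \<Rightarrow> 'a" where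
  "eval2 d u v = poly (poly d [:v:]) u"

definition eval3 :: "'a::comm_ring_1 tens3 \<Rightarrow> 'a \<Rightarrow> 'a \<Rightarrow> 'a \<Rightarrow> 'a" where
  "eval3 e x y z = eval2 (poly e [:[:z:]:]) x y"

lemma eval2_add [simp]: "eval2 (d + e) u v = eval2 d u v + eval2 e u v"
  and eval2_diff [simp]: "eval2 (d - e) u v = eval2 d u v - eval2 e u v"
  and eval2_minus [simp]: "eval2 (- d) u v = - eval2 d u v"
  and eval2_mult [simp]: "eval2 (d * e) u v = eval2 d u v * eval2 e u v"
  and eval2_0 [simp]: "eval2 0 u v = 0"
  and eval2_1 [simp]: "eval2 1 u v = 1"
  and eval2_smult [simp]: "eval2 (smult a d) u v = poly a u * eval2 d u v"
  and eval2_sum [simp]: "eval2 (sum f A) u v = (\<Sum>i\<in>A. eval2 (f i) u v)"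
  and eval2_power [simp]: "eval2 (d ^ n) u v = eval2 d u v ^ n"
  and eval2_const [simp]: "eval2 [:[:r:]:] u v = r"
  by (simp_all add: eval2_def poly_sum)

lemma poly_map_poly_const: "poly (map_poly (\<lambda>c. [:c:]) p) [:v:] = [:poly p v:]"
  by (induct p) (auto simp: map_poly_pCons mult.commute)

lemma poly_map_poly_const2: "poly (map_poly (\<lambda>c. [:[:c:]:]) p) [:[:v:]:] = [:[:poly p v:]:]"
  by (induct p) (auto simp: map_poly_pCons mult.commute)

lemma eval2_tensor2 [simp]: "eval2 (tensor2 a b) u v = poly a u * poly b v"
  and eval2_sc2 [simp]: "eval2 (sc2 r d) u v = r * eval2 d u v"
  and eval2_bimod [simp]: "eval2 (bimod a d b) u v = poly a u * eval2 d u v * poly b v"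
  by (simp_all add: tensor2_def sc2_def bimod_def eval2_def poly_map_poly_const)

lemma eval2_altdef:
  "eval2 d u v = (\<Sum>j\<le>degree d. \<Sum>i\<le>degree (coeff d j). coeff (coeff d j) i * u ^ i * v ^ j)"
proof -
  have "eval2 d u v = (\<Sum>j\<le>degree d. poly (coeff d j) u * v ^ j)"
    unfolding eval2_def by (subst poly_altdef) (simp add: poly_sum)
  then show ?thesis
    by (subst (asm) poly_altdef) (simp add: sum_distrib_right)
qed

lemma eval2_flip2 [simp]: "eval2 (flip2 d) u v = eval2 d v u"
  by (simp add: flip2_def eval2_altdef[of d v u] poly_monom mult_ac)

lemma eval3_add [simp]: "eval3 (d + e) x y z = eval3 d x y z + eval3 e x y z"
  and eval3_diff [simp]: "eval3 (d - e) x y z = eval3 d x y z - eval3 e x y z"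
  and eval3_mult [simp]: "eval3 (d * e) x y z = eval3 d x y z * eval3 e x y z"
  and eval3_0 [simp]: "eval3 0 x y z = 0"
  and eval3_sum [simp]: "eval3 (sum f A) x y z = (\<Sum>i\<in>A. eval3 (f i) x y z)"
  and eval3_sc3 [simp]: "eval3 (sc3 r e) x y z = r * eval3 e x y z"
  and eval3_tensor21 [simp]: "eval3 (tensor21 w c) x y z = eval2 w x y * poly c z"
  and eval3_tensor3 [simp]: "eval3 (tensor3 a b c) x y z = poly a x * poly b y * poly c z"
  by (simp_all add: eval3_def poly_sum sc3_def tensor21_def tensor3_def poly_map_poly_const2)

lemma eval3_altdef: "eval3 e x y z = (\<Sum>k\<le>degree e. eval2 (coeff e k) x y * z ^ k)"
  unfolding eval3_def by (subst poly_altdef) (simp add: poly_sum)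

lemma eval3_tau3 [simp]: "eval3 (tau3 e) x y z = eval3 e y z x"
  by (simp add: tau3_def eval3_altdef[of e y z x] eval2_altdef poly_monom
      sum_distrib_right sum_distrib_left mult_ac)

lemma eval3_ext_left: "eval3 (ext_left F d) x y z =
    (\<Sum>j\<le>degree d. \<Sum>i\<le>degree (coeff d j). eval2 (F (monom 1 i)) x y * coeff (coeff d j) i * z ^ j)"
  by (simp add: ext_left_def poly_monom mult.assoc)

lemma eval2_all_0_iff_0: "(\<forall>u v. eval2 d u v = 0) \<longleftrightarrow> d = 0"
  for d :: "'a::{idom,ring_char_0} tens2"
proof (intro iffI)
  assume "\<forall>u v. eval2 d u v = 0"
  then have "poly d [:v:] = 0" for v
    unfolding eval2_def using poly_all_0_iff_0 by blast
  then have "range (\<lambda>v. [:v:]) \<subseteq> {q. poly d q = 0}"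
    by auto
  moreover have "infinite (range (\<lambda>v::'a. [:v:]))"
    by (simp add: finite_image_iff inj_def infinite_UNIV_char_0)
  ultimately show "d = 0"
    using poly_roots_finite finite_subset by blast
qed simp

lemma eval2_inject: "(\<And>u v. eval2 d u v = eval2 e u v) \<Longrightarrow> d = e"
  for d e :: "'a::{idom,ring_char_0} tens2"
  using eval2_all_0_iff_0[of "d - e"] by simp

lemma eval3_all_0_iff_0: "(\<forall>x y z. eval3 e x y z = 0) \<longleftrightarrow> e = 0"
  for e :: "'a::{idom,ring_char_0} tens3"
proof (intro iffI)
  assume "\<forall>x y z. eval3 e x y z = 0"
  then have "poly e [:[:v:]:] = 0" for v
    unfolding eval3_def using eval2_all_0_iff_0 by blast
  then have "range (\<lambda>v. [:[:v:]:]) \<subseteq> {q. poly e q = 0}"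
    by auto
  moreover have "infinite (range (\<lambda>v::'a. [:[:v:]:]))"
    by (simp add: finite_image_iff inj_def infinite_UNIV_char_0)
  ultimately show "e = 0"
    using poly_roots_finite finite_subset by blast
qed (simp add: eval3_def)

lemma eval3_eq_0_if_distinct:
  fixes e :: "'a::{idom,ring_char_0} tens3"
  assumes "\<And>x y z. distinct [x, y, z] \<Longrightarrow> eval3 e x y z = 0"
  shows "e = 0"
proof -
  define V :: "'a tens3" where "V = (tensor3 [:0, 1:] 1 1 - tensor3 1 [:0, 1:] 1)
      * (tensor3 1 [:0, 1:] 1 - tensor3 1 1 [:0, 1:]) * (tensor3 [:0, 1:] 1 1 - tensor3 1 1 [:0, 1:])"
  have eval_V: "eval3 V x y z = (x - y) * (y - z) * (x - z)" for x y z
    by (simp add: V_def)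
  have "eval3 (V * e) x y z = 0" for x y z
    using assms[of x y z] by (cases "distinct [x, y, z]") (auto simp: eval_V)
  then have "V * e = 0"
    using eval3_all_0_iff_0 by blast
  moreover have "V \<noteq> 0"
    using eval_V[of 0 1 2] by auto
  ultimately show ?thesis
    by simp
qed

section \<open>Double brackets on \<open>k[t]\<close>\<close>

lemma
  assumes "double_bracket B"
  shows double_bracket_add_right: "B a (b + c) = B a b + B a c"
    and double_bracket_smult_right: "B a (smult r b) = sc2 r (B a b)"
    and double_bracket_antisym: "B a b = - flip2 (B b a)"
    and double_bracket_Leibniz: "B a (b * c) = bimod 1 (B a b) c + bimod b (B a c) 1"
  using assms unfolding double_bracket_def by blast+

lemma bimod_1_1 [simp]: "bimod 1 d 1 = d"
  by (simp add: bimod_def)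

lemma double_bracket_const_right:
  assumes "double_bracket B"
  shows "B a [:c:] = 0"
proof -
  have "B a 1 = B a 1 + B a 1"
    using double_bracket_Leibniz[OF assms, of a 1 1] by simp
  then have "B a 1 = 0"
    by simp
  then show ?thesis
    using double_bracket_smult_right[OF assms, of a c 1] by (simp add: sc2_def)
qed

lemma eval2_double_bracket_right:
  assumes "double_bracket B"
  shows "(u - v) * eval2 (B a b) u v = eval2 (B a [:0, 1:]) u v * (poly b u - poly b v)"
proof (induct b)
  case 0
  then show ?case
    using double_bracket_const_right[OF assms, of a 0] by simp
next
  case (pCons c b)
  have "B a (pCons c b) = B a ([:c:] + [:0, 1:] * b)"
    by (rule arg_cong[where f = "B a"]) simp
  also have "\<dots> = bimod 1 (B a [:0, 1:]) b + bimod [:0, 1:] (B a b) 1"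
    by (simp only: double_bracket_add_right[OF assms] double_bracket_Leibniz[OF assms]
        double_bracket_const_right[OF assms] add_0_left)
  finally have "eval2 (B a (pCons c b)) u v = eval2 (B a [:0, 1:]) u v * poly b v + u * eval2 (B a b) u v"
    by simp
  then have "(u - v) * eval2 (B a (pCons c b)) u v
      = (u - v) * eval2 (B a [:0, 1:]) u v * poly b v + u * ((u - v) * eval2 (B a b) u v)"
    by (simp add: algebra_simps)
  also have "\<dots> = (u - v) * eval2 (B a [:0, 1:]) u v * poly b v
      + u * (eval2 (B a [:0, 1:]) u v * (poly b u - poly b v))"
    by (simp only: pCons(2))
  also have "\<dots> = eval2 (B a [:0, 1:]) u v * (poly (pCons c b) u - poly (pCons c b) v)"
    by (simp add: algebra_simps)
  finally show ?case .
qed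

lemma eval2_double_bracket_swap:
  assumes "double_bracket B"
  shows "eval2 (B a b) u v = - eval2 (B b a) v u"
  by (subst double_bracket_antisym[OF assms]) simp

lemma eval2_double_bracket:
  assumes "double_bracket B"
  shows "(u - v)^2 * eval2 (B a b) u v
    = eval2 (B [:0, 1:] [:0, 1:]) u v * (poly a u - poly a v) * (poly b u - poly b v)"
proof -
  have "(u - v) * eval2 (B a [:0, 1:]) u v = (v - u) * eval2 (B [:0, 1:] a) v u"
    by (subst eval2_double_bracket_swap[OF assms]) (simp add: algebra_simps)
  also have "\<dots> = eval2 (B [:0, 1:] [:0, 1:]) u v * (poly a u - poly a v)"
    by (subst eval2_double_bracket_right[OF assms], subst eval2_double_bracket_swap[OF assms])
      (simp add: algebra_simps)
  finally show ?thesis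
    using eval2_double_bracket_right[OF assms, of u v a b]
    by (simp add: power2_eq_square) (metis mult.assoc)
qed

lemma poly_poly_const: "poly (poly d q) u = poly (poly d [:poly q u:]) u"
  by (induct d) auto

lemma double_bracket_generator_factor:
  fixes B :: "'a::{idom,ring_char_0} poly \<Rightarrow> 'a poly \<Rightarrow> 'a tens2"
  assumes "double_bracket B"
  obtains S where "B [:0, 1:] [:0, 1:] = (tensor2 [:0, 1:] 1 - tensor2 1 [:0, 1:]) * S"
proof -
  let ?P = "B [:0, 1:] [:0, 1:]"
  have "eval2 ?P u u = 0" for u
    using eval2_double_bracket_swap[OF assms, of "[:0, 1:]" "[:0, 1:]" u u] by simp
  then have "poly (poly ?P [:0, 1:]) u = 0" for u
    by (subst poly_poly_const) (simp add: eval2_def)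
  then have "poly ?P [:0, 1:] = 0"
    using poly_all_0_iff_0 by blast
  then have "[:- [:0, 1:], 1:] dvd ?P"
    by (simp only: poly_eq_0_iff_dvd)
  then obtain S where "?P = [:- [:0, 1:], 1:] * S"
    by (rule dvdE)
  moreover have "[:- [:0, 1:], 1:] = - (tensor2 [:0, 1:] 1 - tensor2 1 [:0, 1::'a:])"
    by (rule eval2_inject) (simp add: eval2_def[of "[:_, _:]"])
  ultimately have "?P = (tensor2 [:0, 1:] 1 - tensor2 1 [:0, 1:]) * - S"
    by (simp only: mult_minus_left mult_minus_right)
  then show thesis ..
qed

lemma double_bracket_factor_sym:
  fixes B :: "'a::idom poly \<Rightarrow> 'a poly \<Rightarrow> 'a tens2"
  assumes "double_bracket B"
    and factor: "B [:0, 1:] [:0, 1:] = (tensor2 [:0, 1:] 1 - tensor2 1 [:0, 1:]) * S"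
  shows "eval2 S u v = eval2 S v u"
proof -
  have "(u - v) * eval2 S u v = (u - v) * eval2 S v u"
    using eval2_double_bracket_swap[OF assms(1), of "[:0, 1:]" "[:0, 1:]" u v]
    by (simp add: factor algebra_simps)
  then show ?thesis
    by (cases "u = v") simp_all
qed

lemma eval2_double_bracket_factor:
  fixes B :: "'a::idom poly \<Rightarrow> 'a poly \<Rightarrow> 'a tens2"
  assumes "double_bracket B"
    and factor: "B [:0, 1:] [:0, 1:] = (tensor2 [:0, 1:] 1 - tensor2 1 [:0, 1:]) * S"
  shows "(u - v) * eval2 (B a b) u v = eval2 S u v * (poly a u - poly a v) * (poly b u - poly b v)"
proof (cases "u = v")
  case False
  have "(u - v) * ((u - v) * eval2 (B a b) u v)
      = (u - v) * (eval2 S u v * (poly a u - poly a v) * (poly b u - poly b v))"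
    using eval2_double_bracket[OF assms(1), of u v a b]
    by (simp add: factor power2_eq_square algebra_simps)
  then show ?thesis
    using False by simp
qed simp

section \<open>The triple bracket\<close>

lemma eval3_ext_left_double_bracket:
  fixes B :: "'a::idom poly \<Rightarrow> 'a poly \<Rightarrow> 'a tens2"
  assumes "double_bracket B"
    and factor: "B [:0, 1:] [:0, 1:] = (tensor2 [:0, 1:] 1 - tensor2 1 [:0, 1:]) * S"
  shows "(x - y) * eval3 (ext_left (B a) d) x y z
    = eval2 S x y * (poly a x - poly a y) * (eval2 d x z - eval2 d y z)"
proof -
  let ?K = "eval2 S x y * (poly a x - poly a y)"
  have monom: "(x - y) * eval2 (B a (monom 1 i)) x y = ?K * (x ^ i - y ^ i)" for i
    using eval2_double_bracket_factor[OF assms, of x y a "monom 1 i"] by (simp add: poly_monom)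
  have "(x - y) * eval3 (ext_left (B a) d) x y z = (\<Sum>j\<le>degree d. \<Sum>i\<le>degree (coeff d j).
      ((x - y) * eval2 (B a (monom 1 i)) x y) * coeff (coeff d j) i * z ^ j)"
    by (simp add: eval3_ext_left sum_distrib_left mult.assoc)
  also have "\<dots> = (\<Sum>j\<le>degree d. \<Sum>i\<le>degree (coeff d j).
      ?K * (coeff (coeff d j) i * x ^ i * z ^ j) - ?K * (coeff (coeff d j) i * y ^ i * z ^ j))"
    by (simp only: monom) (simp add: algebra_simps)
  also have "\<dots> = ?K * (eval2 d x z - eval2 d y z)"
    by (simp only: eval2_altdef[of d x z] eval2_altdef[of d y z] sum_distrib_left sum_subtractf
        right_diff_distrib)
  finally show ?thesis .
qed

lemma eval3_triple_bracket_summand: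
  fixes B :: "'a::idom poly \<Rightarrow> 'a poly \<Rightarrow> 'a tens2"
  assumes "double_bracket B"
    and factor: "B [:0, 1:] [:0, 1:] = (tensor2 [:0, 1:] 1 - tensor2 1 [:0, 1:]) * S"
  shows "(x - y) * (y - z) * (x - z) * eval3 (ext_left (B a) (B b c)) x y z
    = eval2 S x y * (poly a x - poly a y) *
      ((y - z) * eval2 S x z * (poly b x - poly b z) * (poly c x - poly c z)
     - (x - z) * eval2 S y z * (poly b y - poly b z) * (poly c y - poly c z))"
proof -
  have "(x - y) * (y - z) * (x - z) * eval3 (ext_left (B a) (B b c)) x y z
      = (y - z) * (x - z) * ((x - y) * eval3 (ext_left (B a) (B b c)) x y z)"
    by (simp only: mult_ac)
  also have "\<dots> = eval2 S x y * (poly a x - poly a y) *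
      ((y - z) * ((x - z) * eval2 (B b c) x z) - (x - z) * ((y - z) * eval2 (B b c) y z))"
    by (simp only: eval3_ext_left_double_bracket[OF assms]) (simp add: algebra_simps)
  finally show ?thesis
    by (simp only: eval2_double_bracket_factor[OF assms]) (simp add: algebra_simps)
qed

definition triple_kernel :: "('a::comm_ring_1 \<Rightarrow> 'a \<Rightarrow> 'a) \<Rightarrow> 'a \<Rightarrow> 'a \<Rightarrow> 'a \<Rightarrow> 'a" where
  "triple_kernel s x y z = (y - z) * s x y * s x z + (z - x) * s x y * s y z + (x - y) * s x z * s y z"

lemma triple_kernel_cyclic_identity:
  fixes s :: "'a::comm_ring_1 \<Rightarrow> 'a \<Rightarrow> 'a" and a b c :: "'a \<Rightarrow> 'a"
  assumes sym: "\<And>u v. s u v = s v u"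
  defines "T \<equiv> \<lambda>f g h u v w. s u v * (f u - f v) *
      ((v - w) * s u w * (g u - g w) * (h u - h w) - (u - w) * s v w * (g v - g w) * (h v - h w))"
  shows "T a b c x y z + T b c a y z x + T c a b z x y
    = triple_kernel s x y z * (a x - a y) * (b y - b z) * (c x - c z)"
  unfolding T_def triple_kernel_def sym[of y x] sym[of z x] sym[of z y]
  by (simp add: algebra_simps)

lemma eval3_triple_bracket:
  fixes B :: "'a::idom poly \<Rightarrow> 'a poly \<Rightarrow> 'a tens2"
  assumes "double_bracket B"
    and factor: "B [:0, 1:] [:0, 1:] = (tensor2 [:0, 1:] 1 - tensor2 1 [:0, 1:]) * S"
  shows "(x - y) * (y - z) * (x - z) * eval3 (triple_bracket B a b c) x y z
    = triple_kernel (eval2 S) x y z * (poly a x - poly a y) * (poly b y - poly b z) * (poly c x - poly c z)"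
proof -
  have "(y - z) * (z - x) * (y - x) = (x - y) * (y - z) * (x - z)"
    and "(z - x) * (x - y) * (z - y) = (x - y) * (y - z) * (x - z)"
    by (simp_all add: algebra_simps)
  then show ?thesis
    unfolding triple_bracket_def eval3_add eval3_tau3 distrib_left
    using eval3_triple_bracket_summand[OF assms, of x y z a b c]
      eval3_triple_bracket_summand[OF assms, of y z x b c a]
      eval3_triple_bracket_summand[OF assms, of z x y c a b]
      triple_kernel_cyclic_identity[where s = "eval2 S" and a = "poly a" and b = "poly b" and c = "poly c"]
      double_bracket_factor_sym[OF assms]
    by metis
qed

lemma quasi_poisson_iff_eval3:
  fixes B :: "'a::field_char_0 poly \<Rightarrow> 'a poly \<Rightarrow> 'a tens2"
  shows "quasi_poisson B \<longleftrightarrow> (\<forall>a b c x y z. distinct [x, y, z] \<longrightarrow>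
    eval3 (triple_bracket B a b c) x y z
      = 1/4 * (poly a x - poly a y) * (poly b y - poly b z) * (poly c x - poly c z))"
proof -
  have rhs: "eval3 (sc3 (1/4) (tensor3 (c * a) b 1 - tensor3 (c * a) 1 b - tensor3 c (a * b) 1
      + tensor3 c a b - tensor3 a b c + tensor3 a 1 (b * c) + tensor3 1 (a * b) c
      - tensor3 1 a (b * c))) x y z
    = 1/4 * (poly a x - poly a y) * (poly b y - poly b z) * (poly c x - poly c z)" for a b c x y z
    by (simp add: algebra_simps)
  have tens3_eq_iff: "d = e \<longleftrightarrow> (\<forall>x y z. distinct [x, y, z] \<longrightarrow> eval3 d x y z = eval3 e x y z)"
    for d e :: "'a tens3"
    using eval3_eq_0_if_distinct[of "d - e"] by auto
  show ?thesis
    unfolding quasi_poisson_def by (simp only: tens3_eq_iff rhs)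
qed

lemma quasi_poisson_iff_triple_kernel:
  fixes B :: "'a::field_char_0 poly \<Rightarrow> 'a poly \<Rightarrow> 'a tens2"
  assumes "double_bracket B"
    and factor: "B [:0, 1:] [:0, 1:] = (tensor2 [:0, 1:] 1 - tensor2 1 [:0, 1:]) * S"
  shows "quasi_poisson B \<longleftrightarrow> (\<forall>x y z. distinct [x, y, z] \<longrightarrow>
    triple_kernel (eval2 S) x y z = 1/4 * ((x - y) * (y - z) * (x - z)))"
  unfolding quasi_poisson_iff_eval3
proof (intro iffI allI impI)
  fix x y z :: 'a
  let ?V = "(x - y) * (y - z) * (x - z)"
  assume qp: "\<forall>a b c x y z. distinct [x, y, z] \<longrightarrow> eval3 (triple_bracket B a b c) x y z
      = 1/4 * (poly a x - poly a y) * (poly b y - poly b z) * (poly c x - poly c z)"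
    and distinct: "distinct [x, y, z]"
  have "?V * eval3 (triple_bracket B [:0, 1:] [:0, 1:] [:0, 1:]) x y z = triple_kernel (eval2 S) x y z * ?V"
    using eval3_triple_bracket[OF assms, of x y z "[:0, 1:]" "[:0, 1:]" "[:0, 1:]"]
    by (simp only: poly_pCons poly_0 mult_zero_right add_0_left add_0_right mult_1_right mult.assoc)
  moreover have "eval3 (triple_bracket B [:0, 1:] [:0, 1:] [:0, 1:]) x y z = 1/4 * ?V"
    using qp distinct by (simp add: mult.assoc)
  ultimately have "?V * (1/4 * ?V) = triple_kernel (eval2 S) x y z * ?V"
    by simp
  then show "triple_kernel (eval2 S) x y z = 1/4 * ?V"
    using distinct by (simp add: mult.commute)
next
  fix a b c :: "'a poly" and x y z :: 'a
  let ?V = "(x - y) * (y - z) * (x - z)"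
  assume kernel: "\<forall>x y z. distinct [x, y, z] \<longrightarrow>
      triple_kernel (eval2 S) x y z = 1/4 * ((x - y) * (y - z) * (x - z))"
    and distinct: "distinct [x, y, z]"
  have "?V * eval3 (triple_bracket B a b c) x y z
      = ?V * (1/4 * (poly a x - poly a y) * (poly b y - poly b z) * (poly c x - poly c z))"
    unfolding eval3_triple_bracket[OF assms] kernel[rule_format, OF distinct]
    by (simp only: mult_ac)
  then show "eval3 (triple_bracket B a b c) x y z
      = 1/4 * (poly a x - poly a y) * (poly b y - poly b z) * (poly c x - poly c z)"
    using distinct by simp
qed

section \<open>Symmetric solutions of the kernel equation\<close>

lemma triple_kernel_bilinear:
  "triple_kernel (\<lambda>u v. l + m * (u + v) + n * (u * v)) x y z
    = (m^2 - l * n) * ((x - y) * (y - z) * (x - z))"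
  by (simp add: triple_kernel_def algebra_simps power2_eq_square)

lemma symmetric_affine_imp_bilinear:
  fixes s :: "'a::comm_ring_1 \<Rightarrow> 'a \<Rightarrow> 'a"
  assumes sym: "\<And>u v. s u v = s v u"
    and affine: "\<And>u v. s u v = f v + u * g v"
  obtains l m n where "\<And>u v. s u v = l + m * (u + v) + n * (u * v)"
proof
  have f: "f v = f 0 + v * g 0" for v
    using sym[of 0 v] by (simp add: affine)
  have g: "g v = g 0 + v * (g 1 - g 0)" for v
    using sym[of 1 v] f[of v] f[of 1] by (simp add: affine algebra_simps)
  show "s u v = f 0 + g 0 * (u + v) + (g 1 - g 0) * (u * v)" for u v
    by (simp add: affine f[of v] g[of v] algebra_simps)
qed

lemma poly_degree_le_1:
  fixes p :: "'a::comm_semiring_1 poly"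
  assumes "degree p \<le> 1"
  shows "poly p x = coeff p 0 + x * coeff p 1"
proof -
  have "poly p x = poly (\<Sum>i\<le>1. monom (coeff p i) i) x"
    by (simp only: poly_as_sum_of_monoms'[OF assms])
  then show ?thesis
    by (simp add: poly_sum poly_monom mult.commute)
qed

lemma coeff_poly_const: "coeff (poly S [:v:]) i = poly (map_poly (\<lambda>p. coeff p i) S) v"
  by (induct S) (auto simp: map_poly_pCons)

lemma poly_eq_0_if_cofinite_roots:
  fixes p :: "'a::{idom,ring_char_0} poly"
  assumes "finite A" and "\<And>x. x \<notin> A \<Longrightarrow> poly p x = 0"
  shows "p = 0"
proof (rule ccontr)
  assume "p \<noteq> 0"
  then have "finite (A \<union> {x. poly p x = 0})"
    using assms(1) poly_roots_finite by blast
  moreover have "A \<union> {x. poly p x = 0} = UNIV"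
    using assms(2) by blast
  ultimately show False
    using infinite_UNIV_char_0 by metis
qed

lemma degree_le_1_if_triple_kernel:
  fixes S :: "'a::{idom,ring_char_0} tens2"
  assumes kernel: "\<forall>x y z. distinct [x, y, z] \<longrightarrow>
    triple_kernel (eval2 S) x y z = c * ((x - y) * (y - z) * (x - z))"
  shows "degree (poly S [:v:]) \<le> 1"
proof (rule ccontr)
  define d where "d = degree (poly S [:v:])"
  assume "\<not> degree (poly S [:v:]) \<le> 1"
  then have "2 \<le> d"
    by (simp add: d_def)
  define h where "h = map_poly (\<lambda>p. coeff p d) S"
  have h: "poly h w = coeff (poly S [:w:]) d" for w
    by (simp add: h_def coeff_poly_const)
  have "h \<noteq> 0"
    using h[of v] \<open>2 \<le> d\<close> by (auto simp: d_def)
  then have roots: "finite {w. poly h w = 0}"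
    by (rule poly_roots_finite)
  obtain y where "y \<notin> {w. poly h w = 0}"
    using ex_new_if_finite[OF infinite_UNIV_char_0 roots] by blast
  moreover obtain z where "z \<notin> insert y {w. poly h w = 0}"
    using ex_new_if_finite[OF infinite_UNIV_char_0 finite.insertI[OF roots]] by blast
  ultimately have "poly h y \<noteq> 0" "poly h z \<noteq> 0" "y \<noteq> z"
    by auto
  define p where "p = poly S [:y:]"
  define q where "q = poly S [:z:]"
  have "d \<le> degree p" "d \<le> degree q"
    using \<open>poly h y \<noteq> 0\<close> \<open>poly h z \<noteq> 0\<close> by (auto simp: p_def q_def h intro: le_degree)
  text \<open>Read as a polynomial identity in \<open>x\<close>, the kernel equation at \<open>(x, y, z)\<close> has the
    term \<open>(y - z) p q\<close> of degree \<open>deg p + deg q\<close>; all other terms have smaller degree.\<close>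
  define r where "r = smult (eval2 S y z) ([:z, -1:] * p + [:-y, 1:] * q)
      - smult (c * (y - z)) ([:-y, 1:] * [:-z, 1:])"
  have "poly (smult (y - z) (p * q) + r) x = 0" if "x \<notin> {y, z}" for x
  proof -
    have "poly (smult (y - z) (p * q) + r) x
        = triple_kernel (eval2 S) x y z - c * ((x - y) * (y - z) * (x - z))"
      by (simp add: r_def p_def q_def triple_kernel_def eval2_def algebra_simps)
    then show ?thesis
      using kernel that \<open>y \<noteq> z\<close> by simp
  qed
  then have "smult (y - z) (p * q) + r = 0"
    by (intro poly_eq_0_if_cofinite_roots[of "{y, z}"]) auto
  moreover have "degree r < degree (smult (y - z) (p * q))"
  proof -
    have "degree ([:z, -1:] * p) \<le> degree p + degree q - 1"
      and "degree ([:-y, 1:] * q) \<le> degree p + degree q - 1"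
      and "degree ([:-y, 1:] * [:-z, 1:]) \<le> degree p + degree q - 1"
      using degree_mult_le[of "[:z, -1:]" p] degree_mult_le[of "[:-y, 1:]" q]
        degree_mult_le[of "[:-y, 1:]" "[:-z, 1:]"] \<open>d \<le> degree p\<close> \<open>d \<le> degree q\<close> \<open>2 \<le> d\<close>
      by simp_all
    then have "degree r \<le> degree p + degree q - 1"
      unfolding r_def by (intro degree_diff_le degree_add_le order.trans[OF degree_smult_le])
    moreover have "p \<noteq> 0" "q \<noteq> 0"
      using \<open>d \<le> degree p\<close> \<open>d \<le> degree q\<close> \<open>2 \<le> d\<close> by auto
    ultimately show ?thesis
      using \<open>y \<noteq> z\<close> \<open>2 \<le> d\<close> \<open>d \<le> degree p\<close> by (simp add: degree_mult_eq)
  qed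
  ultimately show False
    by (metis degree_add_eq_left degree_0 not_less_zero)
qed

lemma triple_kernel_eq_iff_bilinear:
  fixes S :: "'a::{idom,ring_char_0} tens2"
  assumes sym: "\<And>u v. eval2 S u v = eval2 S v u"
  shows "(\<forall>x y z. distinct [x, y, z] \<longrightarrow>
      triple_kernel (eval2 S) x y z = c * ((x - y) * (y - z) * (x - z)))
    \<longleftrightarrow> (\<exists>l m n. (\<forall>u v. eval2 S u v = l + m * (u + v) + n * (u * v)) \<and> m^2 - l * n = c)"
proof
  assume kernel: "\<forall>x y z. distinct [x, y, z] \<longrightarrow>
      triple_kernel (eval2 S) x y z = c * ((x - y) * (y - z) * (x - z))"
  have affine: "eval2 S u v = coeff (poly S [:v:]) 0 + u * coeff (poly S [:v:]) 1" for u v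
    unfolding eval2_def by (rule poly_degree_le_1[OF degree_le_1_if_triple_kernel[OF kernel]])
  obtain l m n where bilinear: "\<And>u v. eval2 S u v = l + m * (u + v) + n * (u * v)"
    using symmetric_affine_imp_bilinear[where s = "eval2 S", OF sym affine] by blast
  have "(m^2 - l * n) * 2 = c * 2"
    using kernel[rule_format, of 0 1 2] triple_kernel_bilinear[of l m n 0 1 2]
    by (simp add: bilinear[abs_def] algebra_simps)
  then have "m^2 - l * n = c"
    by (metis mult_cancel_right zero_neq_numeral)
  with bilinear show "\<exists>l m n. (\<forall>u v. eval2 S u v = l + m * (u + v) + n * (u * v)) \<and> m^2 - l * n = c"
    by blast
next
  assume "\<exists>l m n. (\<forall>u v. eval2 S u v = l + m * (u + v) + n * (u * v)) \<and> m^2 - l * n = c"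
  then obtain l m n where "eval2 S = (\<lambda>u v. l + m * (u + v) + n * (u * v))" and "m^2 - l * n = c"
    by (auto simp: fun_eq_iff)
  then show "\<forall>x y z. distinct [x, y, z] \<longrightarrow>
      triple_kernel (eval2 S) x y z = c * ((x - y) * (y - z) * (x - z))"
    by (simp add: triple_kernel_bilinear)
qed

lemma generator_form_iff_bilinear:
  fixes S :: "'a::{idom,ring_char_0} tens2"
  assumes factor: "P = (tensor2 [:0, 1:] 1 - tensor2 1 [:0, 1:]) * S"
  shows "P = sc2 l (tensor2 [:0, 1:] 1 - tensor2 1 [:0, 1:])
       + sc2 m (tensor2 ([:0, 1:]^2) 1 - tensor2 1 ([:0, 1:]^2))
       + sc2 n (tensor2 ([:0, 1:]^2) [:0, 1:] - tensor2 [:0, 1:] ([:0, 1:]^2))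
    \<longleftrightarrow> (\<forall>u v. eval2 S u v = l + m * (u + v) + n * (u * v))"
proof -
  let ?D = "tensor2 [:0, 1:] 1 - tensor2 1 [:0, 1::'a:]"
  let ?G = "sc2 l 1 + sc2 m (tensor2 [:0, 1:] 1 + tensor2 1 [:0, 1:]) + sc2 n (tensor2 [:0, 1:] [:0, 1:])"
  have "sc2 l ?D + sc2 m (tensor2 ([:0, 1:]^2) 1 - tensor2 1 ([:0, 1:]^2))
       + sc2 n (tensor2 ([:0, 1:]^2) [:0, 1:] - tensor2 [:0, 1:] ([:0, 1:]^2)) = ?D * ?G"
    by (rule eval2_inject) (simp add: algebra_simps power2_eq_square)
  moreover have "eval2 ?D 1 0 \<noteq> 0"
    by simp
  then have "?D \<noteq> 0"
    by (metis eval2_0)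
  moreover have "S = ?G \<longleftrightarrow> (\<forall>u v. eval2 S u v = l + m * (u + v) + n * (u * v))"
    using eval2_inject[of S ?G] by auto
  ultimately show ?thesis
    unfolding factor by simp
qed

theorem proposition4p1:
  fixes B :: "'a::field_char_0 poly \<Rightarrow> 'a poly \<Rightarrow> 'a poly poly"
  assumes "double_bracket B"
  shows "quasi_poisson B \<longleftrightarrow>
    (\<exists>l m n :: 'a.
       B [:0, 1:] [:0, 1:] =
         sc2 l (tensor2 [:0, 1:] 1 - tensor2 1 [:0, 1:])
       + sc2 m (tensor2 ([:0, 1:]^2) 1 - tensor2 1 ([:0, 1:]^2))
       + sc2 n (tensor2 ([:0, 1:]^2) [:0, 1:] - tensor2 [:0, 1:] ([:0, 1:]^2))
     \<and> 4 * (m^2 - l * n) = 1)"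
proof -
  obtain S where factor: "B [:0, 1:] [:0, 1:] = (tensor2 [:0, 1:] 1 - tensor2 1 [:0, 1:]) * S"
    using double_bracket_generator_factor[OF assms] by blast
  have "quasi_poisson B \<longleftrightarrow> (\<forall>x y z. distinct [x, y, z] \<longrightarrow>
      triple_kernel (eval2 S) x y z = 1/4 * ((x - y) * (y - z) * (x - z)))"
    by (rule quasi_poisson_iff_triple_kernel[OF assms factor])
  also have "\<dots> \<longleftrightarrow> (\<exists>l m n. (\<forall>u v. eval2 S u v = l + m * (u + v) + n * (u * v)) \<and> m^2 - l * n = 1/4)"
    by (rule triple_kernel_eq_iff_bilinear[OF double_bracket_factor_sym[OF assms factor]])
  also have "\<dots> \<longleftrightarrow> (\<exists>l m n.
       B [:0, 1:] [:0, 1:] =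
         sc2 l (tensor2 [:0, 1:] 1 - tensor2 1 [:0, 1:])
       + sc2 m (tensor2 ([:0, 1:]^2) 1 - tensor2 1 ([:0, 1:]^2))
       + sc2 n (tensor2 ([:0, 1:]^2) [:0, 1:] - tensor2 [:0, 1:] ([:0, 1:]^2))
     \<and> 4 * (m^2 - l * n) = 1)"
  proof -
    have "m^2 - l * n = 1/4 \<longleftrightarrow> 4 * (m^2 - l * n) = 1" for l m n :: 'a
      by (simp add: field_simps)
    then show ?thesis
      by (simp only: generator_form_iff_bilinear[OF factor])
  qed
  finally show ?thesis .
qed

end
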